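(* Let $M>0$, let $\mathcal C$ be a connected component of $\mathbf R^d\setminus\mathcal D_N$, let $\omega_I,\omega_F\in\mathcal C$ and let $\alpha\in C^2([0,L_0],\mathcal C)$ be an embedding with $\alpha(0)=\omega_I$ and $\alpha(L_0)=\omega_F$. Then for every $\eta>0$ there exists a curve $\gamma:[0,L]\to\mathcal C$ which is a $Q_M$-admissible connecting curve between $\omega_I$ and $\omega_F$ and satisfies $\mathrm{dist}(\gamma(s),\alpha([0,L_0]))<\eta$ for all $s\in[0,L]$.
   Context: $\mathcal D_N=\{\omega\in\mathbf R^d:\ \exists(n,l)\in\mathbf Z^{d+1},\ 0<|(n,l)|\le N,\ \omega\cdot n+l=0\}$. For $h=(n,l)\in\mathbf Z^d\times\mathbf Z$ let $E_h=\{\omega\in\mathbf R^d:\ \omega\cdot n+l=0\}$. $S_M$ is the set of $h=(n,l)$ with $n\in\mathbf Z^d\setminus\{0\}$, $l\in\mathbf N$, $0<|h|\le M$, such that $h$ is not of the form $jh'$ with $j\in\mathbf Z$, $|j|\ge2$, $h'\in(\mathbf Z^d\setminus\{0\})\times\mathbf N$. An embedding $\gamma\in C^2([0,L],\mathcal C)$ is a $Q_M$-admissible connecting curve between $\omega_I$ and $\omega_F$ if (a) $\gamma(0)=\omega_I$, $\gamma(L)=\omega_F$, $|\dot\gamma(s)|=1$ for all $s\in(0,L)$; and (b) for all $h=(n,l)\in S_M$ and all $s\in[0,L]$ with $\gamma(s)\in E_h$, one has $n\cdot\dot\gamma(s)\ne0$. *)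

theory Defs
  imports "HOL-Analysis.Analysis"
begin

definition ivec :: "int ^ 'd \<Rightarrow> real ^ 'd" where
  "ivec n = (\<chi> i. real_of_int (n $ i))"

definition hnorm :: "(int ^ 'd::finite) \<times> int \<Rightarrow> real" where
  "hnorm h = sqrt (real_of_int ((\<Sum>i\<in>UNIV. (fst h $ i)^2) + (snd h)^2))"

definition resonant_set :: "real \<Rightarrow> (real ^ 'd::finite) set" where
  "resonant_set N = {\<omega>. \<exists>h :: (int ^ 'd) \<times> int. 0 < hnorm h \<and> hnorm h \<le> N \<and>
        ivec (fst h) \<bullet> \<omega> + real_of_int (snd h) = 0}"

definition E_plane :: "(int ^ 'd::finite) \<times> int \<Rightarrow> (real ^ 'd) set" where
  "E_plane h = {\<omega>. ivec (fst h) \<bullet> \<omega> + real_of_int (snd h) = 0}"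

definition S_set :: "real \<Rightarrow> ((int ^ 'd::finite) \<times> int) set" where
  "S_set M = {h. fst h \<noteq> 0 \<and> snd h \<ge> 0 \<and> 0 < hnorm h \<and> hnorm h \<le> M \<and>
      \<not> (\<exists>(j::int) n' l'. \<bar>j\<bar> \<ge> 2 \<and> n' \<noteq> 0 \<and> l' \<ge> 0 \<and> h = (j *s n', j * l'))}"

definition C2_on :: "(real \<Rightarrow> 'a::real_normed_vector) \<Rightarrow> real set \<Rightarrow> bool" where
  "C2_on f S \<longleftrightarrow> (\<exists>f' f''. (\<forall>t\<in>S. (f has_vector_derivative f' t) (at t within S) \<and>
        (f' has_vector_derivative f'' t) (at t within S)) \<and> continuous_on S f'')"

definition C2_embedding :: "(real \<Rightarrow> 'a::real_normed_vector) \<Rightarrow> real \<Rightarrow> 'a set \<Rightarrow> bool" where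
  "C2_embedding f L C \<longleftrightarrow> C2_on f {0..L} \<and> f ` {0..L} \<subseteq> C \<and> inj_on f {0..L} \<and>
      (\<forall>t\<in>{0..L}. vector_derivative f (at t within {0..L}) \<noteq> 0)"

definition admissible_curve ::
  "real \<Rightarrow> (real ^ 'd::finite) set \<Rightarrow> (real \<Rightarrow> real ^ 'd) \<Rightarrow> real \<Rightarrow> real ^ 'd \<Rightarrow> real ^ 'd \<Rightarrow> bool" where
  "admissible_curve M C \<gamma> L \<omega>I \<omega>F \<longleftrightarrow>
     C2_embedding \<gamma> L C \<and> \<gamma> 0 = \<omega>I \<and> \<gamma> L = \<omega>F \<and>
     (\<forall>s\<in>{0<..<L}. norm (vector_derivative \<gamma> (at s within {0..L})) = 1) \<and>
     (\<forall>h\<in>S_set M. \<forall>s\<in>{0..L}. \<gamma> s \<in> E_plane h \<longrightarrow>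
          ivec (fst h) \<bullet> vector_derivative \<gamma> (at s within {0..L}) \<noteq> 0)"

end

theory Submission
  imports Defs
begin

text \<open>
  The curve \<open>\<alpha>\<close> is pushed off tangency with the finitely many planes \<open>E_h\<close>, \<open>h \<in> S_M\<close>, by a
  bump in a fixed direction: \<open>\<beta> t = \<alpha> t + a t (L0 - t) e\<close>, where \<open>e\<close> is orthogonal to none of
  the normals \<open>n\<close>. The curve \<open>\<beta>\<close> is tangent to \<open>E_h\<close> at an interior time \<open>t\<close> only if
  \<open>a\<close> is a critical value of \<open>t \<mapsto> -(n \<bullet> \<alpha> t + l) / ((n \<bullet> e) t (L0 - t))\<close>, and at an
  endpoint only for one explicit value of \<open>a\<close>; by the one-dimensional Sard theorem almost every
  \<open>a\<close> avoids all of these. For small \<open>a\<close> the curve \<open>\<beta>\<close> stays injective, regular, inside the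
  open set \<open>C\<close> and close to \<open>\<alpha>\<close>, and its arc-length reparametrization is admissible.
\<close>

section \<open>Genericity from Sard's theorem\<close>

lemma negligible_image_zero_derivative:
  fixes g :: "real \<Rightarrow> real"
  assumes der: "\<And>x. x \<in> S \<Longrightarrow> (g has_real_derivative 0) (at x within S)"
  shows "negligible (g ` S)"
proof -
  \<comment> \<open>\<open>baby_Sard\<close> is stated for \<open>real^'n\<close>, so transport \<open>g\<close> to \<open>real^1\<close> and back.\<close>
  let ?S1 = "vec ` S :: (real^1) set"
  let ?g1 = "\<lambda>y::real^1. vec (g (y$1)) :: real^1"
  have "(?g1 has_derivative (\<lambda>h. 0)) (at y within ?S1)" if "y \<in> ?S1" for y
  proof -
    obtain x where x: "x \<in> S" "y = vec x" using \<open>y \<in> ?S1\<close> by auto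
    have "((\<lambda>y::real^1. y$1) has_derivative (\<lambda>h. h$1)) (at y within ?S1)"
      by (rule bounded_linear_imp_has_derivative) auto
    moreover have "(g has_derivative (\<lambda>h. 0)) (at (y$1) within (\<lambda>y::real^1. y$1) ` ?S1)"
      using der[OF x(1)] x by (simp add: has_field_derivative_def image_image mult_zero_left[abs_def])
    ultimately have "((g \<circ> (\<lambda>y::real^1. y$1)) has_derivative (\<lambda>h. 0)) (at y within ?S1)"
      using diff_chain_within by (fastforce simp: o_def)
    moreover have "((vec :: real \<Rightarrow> real^1) has_derivative vec) (at z within T)" for z T
      by (rule bounded_linear_imp_has_derivative) (simp add: linear_conv_bounded_linear[symmetric])
    ultimately show ?thesis
      using diff_chain_within by (fastforce simp: o_def vec_0[unfolded zero_vec_def])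
  qed
  then have "negligible (?g1 ` ?S1)"
    by (intro baby_Sard[where f' = "\<lambda>x h. 0"]) (auto simp: matrix_def zero_vec_def[symmetric])
  then have "negligible ((\<lambda>y::real^1. y$1) ` ?g1 ` ?S1)"
    by (intro negligible_differentiable_image_negligible[where S = "?g1 ` ?S1" and f = "\<lambda>y. y$1"]) (auto intro!: bounded_linear_imp_differentiable_on)
  moreover have "(\<lambda>y::real^1. y$1) ` ?g1 ` ?S1 = g ` S"
    by (auto simp: image_image)
  ultimately show ?thesis by simp
qed

lemma negligible_tangency_parameters:
  fixes g g' :: "real \<Rightarrow> real"
  assumes "L > 0" and der: "\<And>t. t \<in> {0..L} \<Longrightarrow> (g has_real_derivative g' t) (at t within {0..L})"
  shows "negligible {a. \<exists>t\<in>{0..L}. g t + a * (t * (L - t)) = 0 \<and> g' t + a * (L - 2 * t) = 0}"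
proof -
  \<comment> \<open>An interior tangency at \<open>t\<close> forces \<open>a = G t\<close> with \<open>G' t = 0\<close>; at the endpoints \<open>\<psi>\<close>
     vanishes and \<open>a\<close> is determined by \<open>g'\<close>.\<close>
  define \<psi> where "\<psi> t = t * (L - t)" for t
  define G where "G t = - g t / \<psi> t" for t
  define crit where "crit = {t \<in> {0<..<L}. \<exists>a. g t + a * \<psi> t = 0 \<and> g' t + a * (L - 2 * t) = 0}"
  have "negligible (G ` crit)"
  proof (rule negligible_image_zero_derivative)
    fix t assume "t \<in> crit"
    then obtain a where t: "0 < t" "t < L" and a: "g t + a * \<psi> t = 0" "g' t + a * (L - 2 * t) = 0"
      by (auto simp: crit_def)
    have "(g has_real_derivative g' t) (at t)"
      using der[of t] t by (simp add: at_within_Icc_at)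
    moreover have "(\<psi> has_real_derivative L - 2 * t) (at t)"
      unfolding \<psi>_def[abs_def] by (auto intro!: derivative_eq_intros)
    moreover have "\<psi> t \<noteq> 0"
      using t by (simp add: \<psi>_def)
    ultimately have "(G has_real_derivative
        (- g' t * \<psi> t - - g t * (L - 2 * t)) / (\<psi> t * \<psi> t)) (at t)"
      unfolding G_def[abs_def] by (intro DERIV_divide DERIV_minus)
    moreover have "- g' t * \<psi> t - - g t * (L - 2 * t) = 0"
    proof -
      have "g t = - a * \<psi> t" "g' t = - a * (L - 2 * t)"
        using a by linarith+
      then show ?thesis
        by (simp only:) (simp add: algebra_simps)
    qed
    ultimately show "(G has_real_derivative 0) (at t within crit)"
      by (simp add: has_field_derivative_at_within)
  qed
  moreover have "{a. \<exists>t\<in>{0..L}. g t + a * \<psi> t = 0 \<and> g' t + a * (L - 2 * t) = 0}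
      \<subseteq> G ` crit \<union> {- g' 0 / L, g' L / L}"
  proof
    fix a assume "a \<in> {a. \<exists>t\<in>{0..L}. g t + a * \<psi> t = 0 \<and> g' t + a * (L - 2 * t) = 0}"
    then obtain t where t: "t \<in> {0..L}" and a: "g t + a * \<psi> t = 0" "g' t + a * (L - 2 * t) = 0"
      by blast
    consider "t = 0" | "t = L" | "t \<in> {0<..<L}"
      using t by fastforce
    then show "a \<in> G ` crit \<union> {- g' 0 / L, g' L / L}"
    proof cases
      case 3
      then have "t \<in> crit" "\<psi> t \<noteq> 0"
        using a by (auto simp: crit_def \<psi>_def)
      moreover have "G t = a"
        using a \<open>\<psi> t \<noteq> 0\<close> by (simp add: G_def field_simps)
      ultimately show ?thesis by blast
    qed (use a \<open>L > 0\<close> in \<open>auto simp: field_simps\<close>)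
  qed
  ultimately show ?thesis
    unfolding \<psi>_def by (elim negligible_subset[rotated]) simp
qed

lemma exists_not_orthogonal_to_finite:
  fixes V :: "'a::euclidean_space set"
  assumes "finite V" "0 \<notin> V"
  obtains e where "\<And>v. v \<in> V \<Longrightarrow> v \<bullet> e \<noteq> 0"
proof -
  have "negligible (\<Union>v\<in>V. {x. v \<bullet> x = 0})"
    using assms by (intro negligible_Union) (auto intro!: negligible_hyperplane)
  then have "(\<Union>v\<in>V. {x. v \<bullet> x = 0}) \<noteq> UNIV"
    by auto
  then show ?thesis
    using that by blast
qed

section \<open>Small perturbations of regular injective curves\<close>

lemma continuous_nonzero_norm_bounded_below:
  fixes f :: "real \<Rightarrow> 'a::real_normed_vector"
  assumes "continuous_on {a..b} f" and "\<And>t. t \<in> {a..b} \<Longrightarrow> f t \<noteq> 0"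
  obtains m where "m > 0" "\<And>t. t \<in> {a..b} \<Longrightarrow> m \<le> norm (f t)"
proof (cases "a \<le> b")
  case True
  obtain t0 where "t0 \<in> {a..b}" "\<And>t. t \<in> {a..b} \<Longrightarrow> norm (f t0) \<le> norm (f t)"
    using continuous_attains_inf[OF compact_Icc _ continuous_on_norm[OF assms(1)]] True by auto
  then show ?thesis
    using that[of "norm (f t0)"] assms(2) by auto
next
  case False
  then show ?thesis
    using that[of 1] by simp
qed

lemma endpoints_ne_if_derivative_near:
  fixes g g' :: "real \<Rightarrow> 'a::real_normed_vector"
  assumes "s < t"
    and der: "\<And>u. u \<in> {s..t} \<Longrightarrow> (g has_vector_derivative g' u) (at u within {s..t})"
    and near: "\<And>u. u \<in> {s..t} \<Longrightarrow> norm (g' u - v) \<le> B" and "B < norm v"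
  shows "g s \<noteq> g t"
proof
  assume eq: "g s = g t"
  let ?h = "\<lambda>u. g u - u *\<^sub>R v"
  have "(?h has_derivative (\<lambda>d. d *\<^sub>R (g' u - v))) (at u within {s..t})" if "u \<in> {s..t}" for u
    using der[OF that] unfolding has_vector_derivative_def
    by (auto intro!: derivative_eq_intros simp: algebra_simps)
  moreover have "onorm (\<lambda>d::real. d *\<^sub>R (g' u - v)) \<le> B" if "u \<in> {s..t}" for u
    using near[OF that] by (simp add: onorm_scaleR_left onorm_id)
  ultimately have "norm (?h t - ?h s) \<le> B * norm (t - s)"
    using \<open>s < t\<close> by (intro differentiable_bound[of "{s..t}"]) auto
  also have "?h t - ?h s = - ((t - s) *\<^sub>R v)"
    using eq by (simp add: algebra_simps)
  finally have "(t - s) * norm v \<le> B * (t - s)"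
    using \<open>s < t\<close> by simp
  then show False
    using \<open>s < t\<close> \<open>B < norm v\<close> by (simp add: mult.commute)
qed

lemma injective_curve_separated:
  fixes f :: "real \<Rightarrow> 'a::metric_space"
  assumes "continuous_on {a..b} f" "inj_on f {a..b}" "r > 0"
  obtains \<mu> where "\<mu> > 0"
    "\<And>s t. s \<in> {a..b} \<Longrightarrow> t \<in> {a..b} \<Longrightarrow> r \<le> \<bar>s - t\<bar> \<Longrightarrow> \<mu> \<le> dist (f s) (f t)"
proof -
  define K where "K = ({a..b} \<times> {a..b}) \<inter> {z. r \<le> \<bar>fst z - snd z\<bar>}"
  have "compact K"
    unfolding K_def by (intro compact_Int_closed compact_Times compact_Icc closed_Collect_le continuous_intros)
  show ?thesis
  proof (cases "K = {}")
    case True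
    show ?thesis
    proof (rule that[of 1])
      fix s t assume "s \<in> {a..b}" "t \<in> {a..b}" "r \<le> \<bar>s - t\<bar>"
      then have "(s, t) \<in> K" by (simp add: K_def)
      then show "1 \<le> dist (f s) (f t)" using True by simp
    qed simp
  next
    case False
    have "continuous_on K (\<lambda>z. dist (f (fst z)) (f (snd z)))"
      unfolding K_def using assms(1) by (intro continuous_intros continuous_on_compose2[OF assms(1)]) auto
    then obtain z0 where z0: "z0 \<in> K" "\<And>z. z \<in> K \<Longrightarrow> dist (f (fst z0)) (f (snd z0)) \<le> dist (f (fst z)) (f (snd z))"
      using continuous_attains_inf[OF \<open>compact K\<close> False] by blast
    have "f (fst z0) \<noteq> f (snd z0)"
      using z0(1) \<open>r > 0\<close> inj_onD[OF assms(2)] by (force simp: K_def)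
    then show ?thesis
      using z0 that[of "dist (f (fst z0)) (f (snd z0))"] by (auto simp: K_def)
  qed
qed

lemma inj_on_add_small_C1_perturbation:
  fixes f f' :: "real \<Rightarrow> 'a::real_normed_vector"
  assumes der: "\<And>t. t \<in> {a..b} \<Longrightarrow> (f has_vector_derivative f' t) (at t within {a..b})"
    and cont: "continuous_on {a..b} f'"
    and nz: "\<And>t. t \<in> {a..b} \<Longrightarrow> f' t \<noteq> 0"
    and inj: "inj_on f {a..b}"
  obtains \<kappa> where "\<kappa> > 0"
    "\<And>p p'. (\<And>t. t \<in> {a..b} \<Longrightarrow> (p has_vector_derivative p' t) (at t within {a..b})) \<Longrightarrow>
       (\<And>t. t \<in> {a..b} \<Longrightarrow> norm (p' t) \<le> \<kappa>) \<Longrightarrow> (\<And>t. t \<in> {a..b} \<Longrightarrow> norm (p t) \<le> \<kappa>) \<Longrightarrow>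
       inj_on (\<lambda>t. f t + p t) {a..b}"
proof -
  obtain m where "m > 0" and m: "\<And>t. t \<in> {a..b} \<Longrightarrow> m \<le> norm (f' t)"
    using continuous_nonzero_norm_bounded_below[OF cont nz] by blast
  obtain r where "r > 0"
    and r: "\<And>s t. s \<in> {a..b} \<Longrightarrow> t \<in> {a..b} \<Longrightarrow> dist s t < r \<Longrightarrow> dist (f' s) (f' t) < m/2"
    using compact_uniformly_continuous[OF cont compact_Icc] \<open>m > 0\<close>
    unfolding uniformly_continuous_on_def by (metis half_gt_zero)
  have "continuous_on {a..b} f"
    using der has_vector_derivative_continuous continuous_on_eq_continuous_within by blast
  then obtain \<mu> where "\<mu> > 0"
    and \<mu>: "\<And>s t. s \<in> {a..b} \<Longrightarrow> t \<in> {a..b} \<Longrightarrow> r \<le> \<bar>s - t\<bar> \<Longrightarrow> \<mu> \<le> dist (f s) (f t)"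
    using injective_curve_separated[OF _ inj \<open>r > 0\<close>] by blast
  show ?thesis
  proof (rule that[of "min (m/4) (\<mu>/4)"])
    show "min (m/4) (\<mu>/4) > 0" using \<open>m > 0\<close> \<open>\<mu> > 0\<close> by simp
    fix p p' :: "real \<Rightarrow> 'a"
    assume pd: "\<And>t. t \<in> {a..b} \<Longrightarrow> (p has_vector_derivative p' t) (at t within {a..b})"
      and p'_small: "\<And>t. t \<in> {a..b} \<Longrightarrow> norm (p' t) \<le> min (m/4) (\<mu>/4)"
      and p_small: "\<And>t. t \<in> {a..b} \<Longrightarrow> norm (p t) \<le> min (m/4) (\<mu>/4)"
    have "f s + p s \<noteq> f t + p t" if "s \<in> {a..b}" "t \<in> {a..b}" "s < t" for s t
    proof (cases "t - s < r")
      case True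
      have "norm ((f' u + p' u) - f' s) \<le> m/2 + m/4" if "u \<in> {s..t}" for u
      proof -
        have "dist (f' u) (f' s) < m/2"
          using r[of u s] that \<open>s \<in> {a..b}\<close> \<open>t \<in> {a..b}\<close> True by (auto simp: dist_real_def)
        moreover have "norm (p' u) \<le> m/4"
          using p'_small[of u] that \<open>s \<in> {a..b}\<close> \<open>t \<in> {a..b}\<close> by auto
        ultimately show ?thesis
          using norm_triangle_ineq[of "f' u - f' s" "p' u"] by (simp add: dist_norm algebra_simps)
      qed
      moreover have "m/2 + m/4 < norm (f' s)"
        using m[OF \<open>s \<in> {a..b}\<close>] \<open>m > 0\<close> by linarith
      moreover have "((\<lambda>u. f u + p u) has_vector_derivative f' u + p' u) (at u within {s..t})"
        if "u \<in> {s..t}" for u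
        using that \<open>s \<in> {a..b}\<close> \<open>t \<in> {a..b}\<close>
        by (intro has_vector_derivative_within_subset[OF has_vector_derivative_add[OF der pd]]) auto
      ultimately show ?thesis
        using \<open>s < t\<close> by (intro endpoints_ne_if_derivative_near[where v = "f' s"])
    next
      case False
      have "\<mu> \<le> norm (f s - f t)" using \<mu> that False by (simp add: dist_norm)
      moreover have "norm (p t - p s) \<le> \<mu>/2"
        using norm_triangle_ineq4[of "p t" "p s"] p_small[OF \<open>s \<in> {a..b}\<close>] p_small[OF \<open>t \<in> {a..b}\<close>] by simp
      moreover have "f s - f t = p t - p s" if "f s + p s = f t + p t"
        using that by (simp add: algebra_simps)
      ultimately show ?thesis
        using \<open>\<mu> > 0\<close> by force
    qed
    then show "inj_on (\<lambda>t. f t + p t) {a..b}"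
      by (metis (no_types, lifting) inj_onI linorder_neqE_linordered_idom)
  qed
qed

lemma bump_bounds:
  fixes L t :: real
  assumes "t \<in> {0..L}"
  shows "\<bar>t * (L - t)\<bar> \<le> L * L" and "\<bar>L - 2 * t\<bar> \<le> L"
proof -
  show "\<bar>t * (L - t)\<bar> \<le> L * L"
    using assms by (simp add: abs_mult mult_mono)
  show "\<bar>L - 2 * t\<bar> \<le> L"
    using assms by (simp add: abs_le_iff)
qed

lemma small_bump_keeps_regular_injective:
  fixes \<alpha> \<alpha>1 :: "real \<Rightarrow> 'a::real_normed_vector"
  assumes "L > 0"
    and der: "\<And>t. t \<in> {0..L} \<Longrightarrow> (\<alpha> has_vector_derivative \<alpha>1 t) (at t within {0..L})"
    and cont: "continuous_on {0..L} \<alpha>1"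
    and nz: "\<And>t. t \<in> {0..L} \<Longrightarrow> \<alpha>1 t \<noteq> 0"
    and inj: "inj_on \<alpha> {0..L}"
  obtains \<epsilon> where "\<epsilon> > 0"
    "\<And>w. norm w < \<epsilon> \<Longrightarrow> inj_on (\<lambda>t. \<alpha> t + (t * (L - t)) *\<^sub>R w) {0..L}"
    "\<And>w t. norm w < \<epsilon> \<Longrightarrow> t \<in> {0..L} \<Longrightarrow> \<alpha>1 t + (L - 2 * t) *\<^sub>R w \<noteq> 0"
proof -
  obtain \<kappa> where "\<kappa> > 0" and \<kappa>:
    "\<And>p p'. (\<And>t. t \<in> {0..L} \<Longrightarrow> (p has_vector_derivative p' t) (at t within {0..L})) \<Longrightarrow>
       (\<And>t. t \<in> {0..L} \<Longrightarrow> norm (p' t) \<le> \<kappa>) \<Longrightarrow> (\<And>t. t \<in> {0..L} \<Longrightarrow> norm (p t) \<le> \<kappa>) \<Longrightarrow>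
       inj_on (\<lambda>t. \<alpha> t + p t) {0..L}"
    using inj_on_add_small_C1_perturbation[OF der cont nz inj] by blast
  obtain m where "m > 0" and m: "\<And>t. t \<in> {0..L} \<Longrightarrow> m \<le> norm (\<alpha>1 t)"
    using continuous_nonzero_norm_bounded_below[OF cont nz] by blast
  define \<epsilon> where "\<epsilon> = min \<kappa> m / (L * L + L + 1)"
  have "\<epsilon> > 0"
    using \<open>\<kappa> > 0\<close> \<open>m > 0\<close> \<open>L > 0\<close> by (simp add: \<epsilon>_def add_pos_pos)
  show ?thesis
  proof (rule that[OF \<open>\<epsilon> > 0\<close>])
    fix w :: 'a assume "norm w < \<epsilon>"
    have "(L * L + L) * norm w \<le> (L * L + L + 1) * norm w"
      by (simp add: mult_right_mono)
    also have "\<dots> < min \<kappa> m"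
      using \<open>norm w < \<epsilon>\<close> \<open>L > 0\<close> by (simp add: \<epsilon>_def pos_less_divide_eq add_pos_pos mult.commute)
    finally have w_small: "(L * L + L) * norm w < min \<kappa> m" .
    have "norm ((t * (L - t)) *\<^sub>R w) \<le> (L * L + L) * norm w"
      and "norm ((L - 2 * t) *\<^sub>R w) \<le> (L * L + L) * norm w" if "t \<in> {0..L}" for t
      using mult_right_mono[OF bump_bounds(1)[OF that] norm_ge_zero[of w]]
        mult_right_mono[OF bump_bounds(2)[OF that] norm_ge_zero[of w]] \<open>L > 0\<close>
      by (simp_all add: distrib_right add_increasing add_increasing2)
    then have bounds: "norm ((t * (L - t)) *\<^sub>R w) < min \<kappa> m" "norm ((L - 2 * t) *\<^sub>R w) < min \<kappa> m"
      if "t \<in> {0..L}" for t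
      using w_small that by (meson order.strict_trans1)+
    show "inj_on (\<lambda>t. \<alpha> t + (t * (L - t)) *\<^sub>R w) {0..L}"
    proof (rule \<kappa>)
      fix t assume "t \<in> {0..L}"
      show "((\<lambda>t. (t * (L - t)) *\<^sub>R w) has_vector_derivative (L - 2 * t) *\<^sub>R w) (at t within {0..L})"
        by (auto intro!: derivative_eq_intros simp: algebra_simps)
      show "norm ((L - 2 * t) *\<^sub>R w) \<le> \<kappa>" "norm ((t * (L - t)) *\<^sub>R w) \<le> \<kappa>"
        using bounds[OF \<open>t \<in> {0..L}\<close>] by linarith+
    qed
    fix t assume "t \<in> {0..L}"
    then have "norm ((L - 2 * t) *\<^sub>R w) < norm (\<alpha>1 t)"
      using bounds m by fastforce
    then show "\<alpha>1 t + (L - 2 * t) *\<^sub>R w \<noteq> 0"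
      by (metis add_eq_0_iff norm_minus_cancel order_less_irrefl)
  qed
qed

lemma exists_transversal_bump_parameter:
  fixes \<alpha> \<alpha>1 :: "real \<Rightarrow> 'a::euclidean_space" and H :: "('a \<times> real) set"
  assumes "L > 0"
    and der: "\<And>t. t \<in> {0..L} \<Longrightarrow> (\<alpha> has_vector_derivative \<alpha>1 t) (at t within {0..L})"
    and "finite H" and e_fst: "\<And>n. n \<in> fst ` H \<Longrightarrow> n \<bullet> e \<noteq> 0"
    and "\<delta> > 0"
  obtains a where "0 < a" "a < \<delta>"
    "\<And>n l t. (n, l) \<in> H \<Longrightarrow> t \<in> {0..L} \<Longrightarrow> n \<bullet> (\<alpha> t + (t * (L - t)) *\<^sub>R a *\<^sub>R e) + l = 0 \<Longrightarrow>
       n \<bullet> (\<alpha>1 t + (L - 2 * t) *\<^sub>R a *\<^sub>R e) \<noteq> 0"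
proof -
  have e: "n \<bullet> e \<noteq> 0" if "(n, l) \<in> H" for n l
    using e_fst that by force
  define bad where "bad n l = {a. \<exists>t\<in>{0..L}. (n \<bullet> \<alpha> t + l) / (n \<bullet> e) + a * (t * (L - t)) = 0 \<and>
      (n \<bullet> \<alpha>1 t) / (n \<bullet> e) + a * (L - 2 * t) = 0}" for n l
  have "negligible (bad n l)" if "(n, l) \<in> H" for n l
    unfolding bad_def
  proof (rule negligible_tangency_parameters[OF \<open>L > 0\<close>])
    fix t assume "t \<in> {0..L}"
    from bounded_linear.has_vector_derivative[OF bounded_linear_inner_right der[OF this]]
    show "((\<lambda>t. (n \<bullet> \<alpha> t + l) / (n \<bullet> e)) has_real_derivative (n \<bullet> \<alpha>1 t) / (n \<bullet> e)) (at t within {0..L})"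
      using e[OF that]
      by (auto intro!: derivative_eq_intros simp: has_real_derivative_iff_has_vector_derivative[symmetric])
  qed
  then have "negligible (\<Union>(n, l)\<in>H. bad n l)"
    using \<open>finite H\<close> by (intro negligible_Union) auto
  moreover have "\<not> negligible {0<..<\<delta>}"
    using negligible_interval(2)[of 0 \<delta>] \<open>\<delta> > 0\<close> by (simp add: box_real)
  ultimately obtain a where a: "a \<in> {0<..<\<delta>}" "a \<notin> (\<Union>(n, l)\<in>H. bad n l)"
    using negligible_subset by blast
  show ?thesis
  proof (rule that)
    show "0 < a" "a < \<delta>"
      using a(1) by simp_all
    fix n l t assume "(n, l) \<in> H" "t \<in> {0..L}"
      and "n \<bullet> (\<alpha> t + (t * (L - t)) *\<^sub>R a *\<^sub>R e) + l = 0"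
    then have "(n \<bullet> \<alpha> t + l) / (n \<bullet> e) + a * (t * (L - t)) = 0"
      using e by (simp add: inner_add_right inner_diff_right field_simps)
    moreover have "a \<notin> bad n l"
      using a(2) \<open>(n, l) \<in> H\<close> by blast
    ultimately have "(n \<bullet> \<alpha>1 t) / (n \<bullet> e) + a * (L - 2 * t) \<noteq> 0"
      using \<open>t \<in> {0..L}\<close> by (auto simp: bad_def)
    then show "n \<bullet> (\<alpha>1 t + (L - 2 * t) *\<^sub>R a *\<^sub>R e) \<noteq> 0"
      using e[OF \<open>(n, l) \<in> H\<close>] by (simp add: inner_add_right inner_diff_right field_simps)
  qed
qed

lemma exists_transversal_bump:
  fixes \<alpha> \<alpha>1 :: "real \<Rightarrow> 'a::euclidean_space" and H :: "('a \<times> real) set"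
  assumes "L > 0"
    and der: "\<And>t. t \<in> {0..L} \<Longrightarrow> (\<alpha> has_vector_derivative \<alpha>1 t) (at t within {0..L})"
    and cont: "continuous_on {0..L} \<alpha>1"
    and nz: "\<And>t. t \<in> {0..L} \<Longrightarrow> \<alpha>1 t \<noteq> 0"
    and inj: "inj_on \<alpha> {0..L}"
    and "finite H" and "0 \<notin> fst ` H"
    and "\<eta> > 0"
  obtains w where
    "inj_on (\<lambda>t. \<alpha> t + (t * (L - t)) *\<^sub>R w) {0..L}"
    "\<And>t. t \<in> {0..L} \<Longrightarrow> \<alpha>1 t + (L - 2 * t) *\<^sub>R w \<noteq> 0"
    "\<And>t. t \<in> {0..L} \<Longrightarrow> norm ((t * (L - t)) *\<^sub>R w) < \<eta>"
    "\<And>n l t. (n, l) \<in> H \<Longrightarrow> t \<in> {0..L} \<Longrightarrow> n \<bullet> (\<alpha> t + (t * (L - t)) *\<^sub>R w) + l = 0 \<Longrightarrow>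
       n \<bullet> (\<alpha>1 t + (L - 2 * t) *\<^sub>R w) \<noteq> 0"
proof -
  obtain \<epsilon> where "\<epsilon> > 0"
    and \<epsilon>: "\<And>w. norm w < \<epsilon> \<Longrightarrow> inj_on (\<lambda>t. \<alpha> t + (t * (L - t)) *\<^sub>R w) {0..L}"
      "\<And>w t. norm w < \<epsilon> \<Longrightarrow> t \<in> {0..L} \<Longrightarrow> \<alpha>1 t + (L - 2 * t) *\<^sub>R w \<noteq> 0"
    using small_bump_keeps_regular_injective[OF \<open>L > 0\<close> der cont nz inj] by blast
  obtain e where e: "\<And>n. n \<in> fst ` H \<Longrightarrow> n \<bullet> e \<noteq> 0"
    using exists_not_orthogonal_to_finite[OF finite_imageI[OF \<open>finite H\<close>] \<open>0 \<notin> fst ` H\<close>] by blast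
  have "L * L + 1 > 0" "norm e + 1 > 0"
    using \<open>L > 0\<close> by (simp_all add: add_pos_pos add_nonneg_pos)
  define \<delta> where "\<delta> = min \<epsilon> (\<eta> / (L * L + 1)) / (norm e + 1)"
  have "\<delta> > 0"
    unfolding \<delta>_def using \<open>L * L + 1 > 0\<close> \<open>norm e + 1 > 0\<close> \<open>\<epsilon> > 0\<close> \<open>\<eta> > 0\<close>
    by (intro divide_pos_pos) auto
  then obtain a where "0 < a" "a < \<delta>"
    and a_trans: "\<And>n l t. (n, l) \<in> H \<Longrightarrow> t \<in> {0..L} \<Longrightarrow> n \<bullet> (\<alpha> t + (t * (L - t)) *\<^sub>R a *\<^sub>R e) + l = 0 \<Longrightarrow>
       n \<bullet> (\<alpha>1 t + (L - 2 * t) *\<^sub>R a *\<^sub>R e) \<noteq> 0"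
    using exists_transversal_bump_parameter[OF \<open>L > 0\<close> der \<open>finite H\<close> e] by blast
  have "norm (a *\<^sub>R e) \<le> a * (norm e + 1)"
    using \<open>0 < a\<close> by simp
  also have "\<dots> < min \<epsilon> (\<eta> / (L * L + 1))"
    using \<open>a < \<delta>\<close> \<open>norm e + 1 > 0\<close> unfolding \<delta>_def by (simp add: pos_less_divide_eq)
  finally have w_small: "norm (a *\<^sub>R e) < \<epsilon>" "norm (a *\<^sub>R e) < \<eta> / (L * L + 1)"
    by simp_all
  show ?thesis
  proof (rule that[of "a *\<^sub>R e"])
    show "inj_on (\<lambda>t. \<alpha> t + (t * (L - t)) *\<^sub>R a *\<^sub>R e) {0..L}"
      by (rule \<epsilon>(1)[OF w_small(1)])
    show "\<alpha>1 t + (L - 2 * t) *\<^sub>R a *\<^sub>R e \<noteq> 0" if "t \<in> {0..L}" for t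
      by (rule \<epsilon>(2)[OF w_small(1) that])
  next
    fix t assume "t \<in> {0..L}"
    have "norm ((t * (L - t)) *\<^sub>R a *\<^sub>R e) \<le> L * L * norm (a *\<^sub>R e)"
      unfolding norm_scaleR[of "t * (L - t)"]
      by (rule mult_right_mono[OF bump_bounds(1)[OF \<open>t \<in> {0..L}\<close>] norm_ge_zero])
    also have "\<dots> < (L * L + 1) * (\<eta> / (L * L + 1))"
      using w_small(2) \<open>L > 0\<close> by (intro mult_le_less_imp_less) auto
    finally show "norm ((t * (L - t)) *\<^sub>R a *\<^sub>R e) < \<eta>"
      using \<open>L * L + 1 > 0\<close> by simp
  qed (rule a_trans)
qed

lemma exists_transversal_perturbation:
  fixes \<alpha> \<alpha>1 \<alpha>2 :: "real \<Rightarrow> 'a::euclidean_space" and H :: "('a \<times> real) set"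
  assumes "L > 0"
    and d1: "\<And>t. t \<in> {0..L} \<Longrightarrow> (\<alpha> has_vector_derivative \<alpha>1 t) (at t within {0..L})"
    and d2: "\<And>t. t \<in> {0..L} \<Longrightarrow> (\<alpha>1 has_vector_derivative \<alpha>2 t) (at t within {0..L})"
    and c2: "continuous_on {0..L} \<alpha>2"
    and nz: "\<And>t. t \<in> {0..L} \<Longrightarrow> \<alpha>1 t \<noteq> 0"
    and inj: "inj_on \<alpha> {0..L}"
    and "open C" and img: "\<alpha> ` {0..L} \<subseteq> C"
    and "finite H" and "0 \<notin> fst ` H"
    and "\<eta> > 0"
  obtains \<beta> \<beta>1 \<beta>2 where
    "\<And>t. t \<in> {0..L} \<Longrightarrow> (\<beta> has_vector_derivative \<beta>1 t) (at t within {0..L})"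
    "\<And>t. t \<in> {0..L} \<Longrightarrow> (\<beta>1 has_vector_derivative \<beta>2 t) (at t within {0..L})"
    "continuous_on {0..L} \<beta>2" "\<And>t. t \<in> {0..L} \<Longrightarrow> \<beta>1 t \<noteq> 0"
    "inj_on \<beta> {0..L}" "\<beta> ` {0..L} \<subseteq> C" "\<beta> 0 = \<alpha> 0" "\<beta> L = \<alpha> L"
    "\<And>t. t \<in> {0..L} \<Longrightarrow> dist (\<beta> t) (\<alpha> t) < \<eta>"
    "\<And>n l t. (n, l) \<in> H \<Longrightarrow> t \<in> {0..L} \<Longrightarrow> n \<bullet> \<beta> t + l = 0 \<Longrightarrow> n \<bullet> \<beta>1 t \<noteq> 0"
proof -
  have cont: "continuous_on {0..L} \<alpha>" "continuous_on {0..L} \<alpha>1"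
    using d1 d2 has_vector_derivative_continuous continuous_on_eq_continuous_within by blast+
  obtain \<delta> where "\<delta> > 0" and \<delta>: "(\<Union>x\<in>\<alpha> ` {0..L}. ball x \<delta>) \<subseteq> C"
    using compact_subset_open_imp_ball_epsilon_subset[OF compact_continuous_image[OF cont(1) compact_Icc] \<open>open C\<close> img]
    by blast
  have "min \<eta> \<delta> > 0"
    using \<open>\<eta> > 0\<close> \<open>\<delta> > 0\<close> by simp
  then obtain w where w_inj: "inj_on (\<lambda>t. \<alpha> t + (t * (L - t)) *\<^sub>R w) {0..L}"
    and w_nz: "\<And>t. t \<in> {0..L} \<Longrightarrow> \<alpha>1 t + (L - 2 * t) *\<^sub>R w \<noteq> 0"
    and close: "\<And>t. t \<in> {0..L} \<Longrightarrow> norm ((t * (L - t)) *\<^sub>R w) < min \<eta> \<delta>"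
    and w_trans: "\<And>n l t. (n, l) \<in> H \<Longrightarrow> t \<in> {0..L} \<Longrightarrow> n \<bullet> (\<alpha> t + (t * (L - t)) *\<^sub>R w) + l = 0 \<Longrightarrow>
       n \<bullet> (\<alpha>1 t + (L - 2 * t) *\<^sub>R w) \<noteq> 0"
    using exists_transversal_bump[OF \<open>L > 0\<close> d1 cont(2) nz inj \<open>finite H\<close> \<open>0 \<notin> fst ` H\<close> \<open>min \<eta> \<delta> > 0\<close>]
    by blast
  define \<beta> where "\<beta> t = \<alpha> t + (t * (L - t)) *\<^sub>R w" for t
  define \<beta>1 where "\<beta>1 t = \<alpha>1 t + (L - 2 * t) *\<^sub>R w" for t
  define \<beta>2 where "\<beta>2 t = \<alpha>2 t - 2 *\<^sub>R w" for t
  show ?thesis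
  proof (rule that[of \<beta> \<beta>1 \<beta>2])
    show "(\<beta> has_vector_derivative \<beta>1 t) (at t within {0..L})" if "t \<in> {0..L}" for t
      unfolding \<beta>_def[abs_def] \<beta>1_def using d1[OF that]
      by (auto intro!: derivative_eq_intros simp: algebra_simps)
    show "(\<beta>1 has_vector_derivative \<beta>2 t) (at t within {0..L})" if "t \<in> {0..L}" for t
      unfolding \<beta>1_def[abs_def] \<beta>2_def using d2[OF that]
      by (auto intro!: derivative_eq_intros simp: algebra_simps)
    show "continuous_on {0..L} \<beta>2"
      unfolding \<beta>2_def[abs_def] using c2 by (intro continuous_intros)
    show "\<beta>1 t \<noteq> 0" if "t \<in> {0..L}" for t
      using w_nz[OF that] by (simp add: \<beta>1_def)
    show "inj_on \<beta> {0..L}"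
      using w_inj by (simp add: \<beta>_def[abs_def])
    show "\<beta> ` {0..L} \<subseteq> C"
      using \<delta> close by (force simp: \<beta>_def dist_norm)
    show "\<beta> 0 = \<alpha> 0" "\<beta> L = \<alpha> L"
      by (simp_all add: \<beta>_def)
    show "dist (\<beta> t) (\<alpha> t) < \<eta>" if "t \<in> {0..L}" for t
      using close[OF that] by (simp add: \<beta>_def dist_norm)
    show "n \<bullet> \<beta>1 t \<noteq> 0" if "(n, l) \<in> H" "t \<in> {0..L}" "n \<bullet> \<beta> t + l = 0" for n l t
      using w_trans that by (simp add: \<beta>_def \<beta>1_def)
  qed
qed

section \<open>Arc-length reparametrization\<close>

lemma strict_mono_on_continuous_image_Icc:
  fixes f :: "real \<Rightarrow> real"
  assumes "a \<le> b" "strict_mono_on {a..b} f" "continuous_on {a..b} f"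
  shows "f ` {a..b} = {f a..f b}"
proof
  show "f ` {a..b} \<subseteq> {f a..f b}"
    using strict_mono_on_leD[OF assms(2)] assms(1) by force
  show "{f a..f b} \<subseteq> f ` {a..b}"
    using IVT'[of f a _ b] assms(1,3) by force
qed

lemma has_real_derivative_inv_into:
  fixes f :: "real \<Rightarrow> real"
  assumes mono: "strict_mono_on {a..b} f" and cont: "continuous_on {a..b} f" and "x \<in> {a..b}"
    and der: "(f has_real_derivative D) (at x within {a..b})" and "D \<noteq> 0"
  shows "(inv_into {a..b} f has_real_derivative inverse D) (at (f x) within f ` {a..b})"
proof -
  have inj: "inj_on f {a..b}"
    using mono by (rule strict_mono_on_imp_inj_on)
  then have "continuous_on (f ` {a..b}) (inv_into {a..b} f)"
    using continuous_on_inv[OF cont compact_Icc] by auto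
  have "(inv_into {a..b} f has_derivative (*) (inverse D)) (at (f x) within f ` {a..b})"
  proof (rule has_derivative_inverse_within)
    show "(f has_derivative (*) D) (at x within {a..b})"
      using der by (simp add: has_field_derivative_def)
    show "continuous (at (f x) within f ` {a..b}) (inv_into {a..b} f)"
      using \<open>continuous_on (f ` {a..b}) (inv_into {a..b} f)\<close> \<open>x \<in> {a..b}\<close>
      by (simp add: continuous_on_eq_continuous_within)
    show "(*) (inverse D) \<circ> (*) D = id"
      using \<open>D \<noteq> 0\<close> by (auto simp: fun_eq_iff)
  qed (use \<open>x \<in> {a..b}\<close> inj in \<open>auto simp: linear_conv_bounded_linear bounded_linear_mult_right\<close>)
  then show ?thesis
    by (simp add: has_field_derivative_def)
qed

lemma inverse_primitive_of_positive:
  fixes v :: "real \<Rightarrow> real"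
  assumes "L0 > 0" and cont: "continuous_on {0..L0} v" and pos: "\<And>t. t \<in> {0..L0} \<Longrightarrow> v t > 0"
  obtains L \<rho> where "L > 0" "bij_betw \<rho> {0..L} {0..L0}" "\<rho> 0 = 0" "\<rho> L = L0"
    "\<And>s. s \<in> {0..L} \<Longrightarrow> (\<rho> has_real_derivative 1 / v (\<rho> s)) (at s within {0..L})"
proof -
  define \<sigma> where "\<sigma> u = integral {0..u} v" for u
  have \<sigma>_deriv: "(\<sigma> has_real_derivative v t) (at t within {0..L0})" if "t \<in> {0..L0}" for t
    unfolding has_real_derivative_iff_has_vector_derivative \<sigma>_def
    using integral_has_vector_derivative[OF cont that] .
  have \<sigma>_cont: "continuous_on {0..L0} \<sigma>"
    using \<sigma>_deriv DERIV_continuous continuous_on_eq_continuous_within by blast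
  have mono: "strict_mono_on {0..L0} \<sigma>"
  proof (rule strict_mono_onI)
    fix s t assume st: "s \<in> {0..L0}" "t \<in> {0..L0}" "s < t"
    show "\<sigma> s < \<sigma> t"
    proof (rule DERIV_pos_imp_increasing_open[OF \<open>s < t\<close>])
      fix x assume "s < x" "x < t"
      then show "\<exists>y. DERIV \<sigma> x :> y \<and> 0 < y"
        using \<sigma>_deriv[of x] pos[of x] st by (auto simp: at_within_Icc_at)
    qed (use st in \<open>auto intro: continuous_on_subset[OF \<sigma>_cont]\<close>)
  qed
  have "\<sigma> 0 = 0"
    by (simp add: \<sigma>_def)
  define L where "L = \<sigma> L0"
  have img: "\<sigma> ` {0..L0} = {0..L}"
    using strict_mono_on_continuous_image_Icc[OF _ mono \<sigma>_cont] \<open>L0 > 0\<close> \<open>\<sigma> 0 = 0\<close> by (simp add: L_def)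
  have "L > 0"
    using strict_mono_onD[OF mono, of 0 L0] \<open>L0 > 0\<close> \<open>\<sigma> 0 = 0\<close> by (simp add: L_def)
  define \<rho> where "\<rho> = inv_into {0..L0} \<sigma>"
  have \<rho>\<sigma>: "\<rho> (\<sigma> t) = t" if "t \<in> {0..L0}" for t
    unfolding \<rho>_def using strict_mono_on_imp_inj_on[OF mono] that by (rule inv_into_f_f)
  have "bij_betw \<rho> {0..L} {0..L0}"
    unfolding \<rho>_def by (rule bij_betw_inv_into) (simp add: bij_betw_def img strict_mono_on_imp_inj_on[OF mono])
  moreover have "\<rho> 0 = 0"
    using \<rho>\<sigma>[of 0] \<open>L0 > 0\<close> \<open>\<sigma> 0 = 0\<close> by simp
  moreover have "\<rho> L = L0"
    unfolding L_def by (rule \<rho>\<sigma>) (use \<open>L0 > 0\<close> in simp)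
  moreover have "(\<rho> has_real_derivative 1 / v (\<rho> s)) (at s within {0..L})" if s: "s \<in> {0..L}" for s
  proof -
    obtain t where t: "t \<in> {0..L0}" "s = \<sigma> t"
      using s unfolding img[symmetric] by blast
    have "(\<rho> has_real_derivative inverse (v t)) (at (\<sigma> t) within \<sigma> ` {0..L0})"
      unfolding \<rho>_def using pos[OF t(1)]
      by (intro has_real_derivative_inv_into[OF mono \<sigma>_cont t(1) \<sigma>_deriv[OF t(1)]]) simp
    moreover have "\<rho> s = t"
      unfolding t(2) by (rule \<rho>\<sigma>[OF t(1)])
    ultimately show ?thesis
      unfolding t(2) img by (simp only: inverse_eq_divide)
  qed
  ultimately show ?thesis
    using that \<open>L > 0\<close> by blast
qed

lemma has_vector_derivative_sgn:
  fixes x :: "real \<Rightarrow> 'a::real_inner"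
  assumes der: "(x has_vector_derivative x') (at s within S)" and "x s \<noteq> 0"
  shows "((\<lambda>s. sgn (x s)) has_vector_derivative
           inverse (norm (x s)) *\<^sub>R (x' - (sgn (x s) \<bullet> x') *\<^sub>R sgn (x s))) (at s within S)"
proof -
  have "((\<lambda>s. norm (x s)) has_derivative (\<lambda>h. h * (x' \<bullet> sgn (x s)))) (at s within S)"
    using has_derivative_compose[OF der[unfolded has_vector_derivative_def] has_derivative_norm[OF \<open>x s \<noteq> 0\<close>]]
    by simp
  moreover have "(\<lambda>h. h * (x' \<bullet> sgn (x s))) = (*) (sgn (x s) \<bullet> x')"
    by (auto simp: fun_eq_iff inner_commute)
  ultimately have "((\<lambda>s. norm (x s)) has_real_derivative sgn (x s) \<bullet> x') (at s within S)"
    by (simp add: has_field_derivative_def)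
  then have "((\<lambda>s. inverse (norm (x s))) has_real_derivative
      - ((sgn (x s) \<bullet> x') * inverse (norm (x s) ^ 2))) (at s within S)"
    using DERIV_inverse_fun \<open>x s \<noteq> 0\<close> by (fastforce simp: numeral_2_eq_2)
  from has_vector_derivative_scaleR[OF this der]
  show ?thesis
    using \<open>x s \<noteq> 0\<close> by (simp add: sgn_div_norm divide_inverse power2_eq_square algebra_simps)
qed

lemma C2_arclength_reparametrization:
  fixes \<beta> \<beta>1 \<beta>2 :: "real \<Rightarrow> 'a::real_inner"
  assumes "L0 > 0"
    and d1: "\<And>t. t \<in> {0..L0} \<Longrightarrow> (\<beta> has_vector_derivative \<beta>1 t) (at t within {0..L0})"
    and d2: "\<And>t. t \<in> {0..L0} \<Longrightarrow> (\<beta>1 has_vector_derivative \<beta>2 t) (at t within {0..L0})"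
    and c2: "continuous_on {0..L0} \<beta>2"
    and nz: "\<And>t. t \<in> {0..L0} \<Longrightarrow> \<beta>1 t \<noteq> 0"
  obtains L \<rho> where "L > 0" "bij_betw \<rho> {0..L} {0..L0}" "\<rho> 0 = 0" "\<rho> L = L0" "C2_on (\<beta> \<circ> \<rho>) {0..L}"
    "\<And>s. s \<in> {0..L} \<Longrightarrow> ((\<beta> \<circ> \<rho>) has_vector_derivative sgn (\<beta>1 (\<rho> s))) (at s within {0..L})"
proof -
  have c1: "continuous_on {0..L0} \<beta>1"
    using d2 has_vector_derivative_continuous continuous_on_eq_continuous_within by blast
  obtain L \<rho> where "L > 0" and bij: "bij_betw \<rho> {0..L} {0..L0}" and "\<rho> 0 = 0" "\<rho> L = L0"
    and \<rho>_deriv: "\<And>s. s \<in> {0..L} \<Longrightarrow> (\<rho> has_real_derivative 1 / norm (\<beta>1 (\<rho> s))) (at s within {0..L})"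
    using inverse_primitive_of_positive[OF \<open>L0 > 0\<close> continuous_on_norm[OF c1]] nz by auto
  have \<rho>_img: "\<rho> ` {0..L} = {0..L0}"
    using bij by (simp add: bij_betw_def)
  have \<rho>_cont: "continuous_on {0..L} \<rho>"
    using \<rho>_deriv DERIV_continuous continuous_on_eq_continuous_within by blast
  define x where "x s = \<beta>1 (\<rho> s)" for s
  define x' where "x' s = (1 / norm (x s)) *\<^sub>R \<beta>2 (\<rho> s)" for s
  have x_nz: "x s \<noteq> 0" if "s \<in> {0..L}" for s
    using nz \<rho>_img that unfolding x_def by blast
  have x_cont: "continuous_on {0..L} x"
    unfolding x_def using continuous_on_compose2[OF c1 \<rho>_cont] \<rho>_img by auto
  have x'_cont: "continuous_on {0..L} x'"
    unfolding x'_def using continuous_on_compose2[OF c2 \<rho>_cont] \<rho>_img x_cont x_nz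
    by (intro continuous_intros) auto
  have chain: "((f \<circ> \<rho>) has_vector_derivative (1 / norm (x s)) *\<^sub>R f' (\<rho> s)) (at s within {0..L})"
    if f_deriv: "\<And>t. t \<in> {0..L0} \<Longrightarrow> (f has_vector_derivative f' t) (at t within {0..L0})"
      and s: "s \<in> {0..L}"
    for f f' :: "real \<Rightarrow> 'a" and s
  proof (rule vector_diff_chain_within)
    show "(\<rho> has_vector_derivative 1 / norm (x s)) (at s within {0..L})"
      using \<rho>_deriv[OF s] by (simp add: has_real_derivative_iff_has_vector_derivative x_def)
    have "\<rho> s \<in> {0..L0}" using \<rho>_img s by blast
    then show "(f has_vector_derivative f' (\<rho> s)) (at (\<rho> s) within \<rho> ` {0..L})"
      using f_deriv \<rho>_img by simp
  qed
  have \<gamma>_deriv: "((\<beta> \<circ> \<rho>) has_vector_derivative sgn (x s)) (at s within {0..L})" if "s \<in> {0..L}" for s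
    using chain[OF d1 that] by (simp add: sgn_div_norm x_def divide_inverse_commute)
  have x_deriv: "(x has_vector_derivative x' s) (at s within {0..L})" if "s \<in> {0..L}" for s
    using chain[OF d2 that] by (simp add: x'_def x_def[abs_def] o_def)
  define x'' where "x'' s = inverse (norm (x s)) *\<^sub>R (x' s - (sgn (x s) \<bullet> x' s) *\<^sub>R sgn (x s))" for s
  have "((\<lambda>s. sgn (x s)) has_vector_derivative x'' s) (at s within {0..L})" if "s \<in> {0..L}" for s
    unfolding x''_def using x_deriv[OF that] x_nz[OF that] by (rule has_vector_derivative_sgn)
  moreover have "continuous_on {0..L} x''"
    unfolding x''_def using x_cont x'_cont x_nz by (auto simp: sgn_div_norm intro!: continuous_intros)
  ultimately have "C2_on (\<beta> \<circ> \<rho>) {0..L}"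
    unfolding C2_on_def using \<gamma>_deriv by (intro exI[of _ "\<lambda>s. sgn (x s)"] exI[of _ x'']) auto
  then show ?thesis
    using that \<open>L > 0\<close> bij \<open>\<rho> 0 = 0\<close> \<open>\<rho> L = L0\<close> \<gamma>_deriv by (auto simp: x_def)
qed

section \<open>Resonant planes and admissible curves\<close>

lemma abs_le_hnorm:
  fixes h :: "(int^'d::finite) \<times> int"
  shows "real_of_int \<bar>fst h $ i\<bar> \<le> hnorm h" and "real_of_int \<bar>snd h\<bar> \<le> hnorm h"
proof -
  have *: "real_of_int \<bar>z\<bar> \<le> hnorm h" if "z^2 \<le> (\<Sum>j\<in>UNIV. (fst h $ j)^2) + (snd h)^2" for z
  proof -
    have "real_of_int \<bar>z\<bar> = sqrt (real_of_int (z^2))"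
      by simp
    also have "\<dots> \<le> hnorm h"
      unfolding hnorm_def using that by (simp only: real_sqrt_le_iff of_int_le_iff)
    finally show ?thesis .
  qed
  show "real_of_int \<bar>fst h $ i\<bar> \<le> hnorm h"
    by (rule *) (use member_le_sum[of i UNIV "\<lambda>j. (fst h $ j)^2"] in \<open>simp add: add_increasing2\<close>)
  show "real_of_int \<bar>snd h\<bar> \<le> hnorm h"
    by (rule *) (simp add: sum_nonneg)
qed

lemma finite_hnorm_le: "finite {h :: (int^'d::finite) \<times> int. hnorm h \<le> R}"
proof -
  define K where "K = \<lceil>R\<rceil>"
  have K: "\<bar>z\<bar> \<le> K" if "real_of_int \<bar>z\<bar> \<le> R" for z
    using that le_of_int_ceiling[of R] unfolding K_def by linarith
  define A :: "(int^'d) set" where "A = vec_nth -` PiE UNIV (\<lambda>_. {-K..K})"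
  have "h \<in> A \<times> {-K..K}" if "hnorm h \<le> R" for h :: "(int^'d) \<times> int"
  proof -
    have "fst h $ i \<in> {-K..K}" for i
      using K abs_le_hnorm(1)[of h i] that by (meson order_trans abs_le_iff atLeastAtMost_iff minus_le_iff)
    moreover have "snd h \<in> {-K..K}"
      using K abs_le_hnorm(2)[of h] that by (meson order_trans abs_le_iff atLeastAtMost_iff minus_le_iff)
    ultimately show ?thesis
      by (simp add: A_def PiE_iff mem_Times_iff)
  qed
  then have "{h. hnorm h \<le> R} \<subseteq> A \<times> {-K..K}"
    by blast
  moreover have "finite A"
    unfolding A_def by (intro finite_vimageI finite_PiE) (auto simp: inj_def vec_nth_inject)
  ultimately show ?thesis
    by (simp add: finite_subset)
qed

lemma closed_E_plane: "closed (E_plane h)"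
  unfolding E_plane_def by (intro closed_Collect_eq continuous_intros)

lemma closed_resonant_set: "closed (resonant_set R :: (real^'d::finite) set)"
proof -
  have "resonant_set R = (\<Union>h\<in>{h :: (int^'d) \<times> int. 0 < hnorm h \<and> hnorm h \<le> R}. E_plane h)"
    unfolding resonant_set_def E_plane_def by blast
  moreover have "finite {h :: (int^'d) \<times> int. 0 < hnorm h \<and> hnorm h \<le> R}"
    by (rule finite_subset[OF _ finite_hnorm_le[of R]]) auto
  ultimately show ?thesis
    by (auto intro!: closed_UN closed_E_plane)
qed

lemma finite_S_set: "finite (S_set M :: ((int^'d::finite) \<times> int) set)"
  by (rule finite_subset[OF _ finite_hnorm_le[of M]]) (auto simp: S_set_def)

lemma ivec_eq_0_iff [simp]: "ivec n = 0 \<longleftrightarrow> n = 0"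
  by (auto simp: ivec_def vec_eq_iff)

lemma C2_embeddingE:
  assumes "C2_embedding \<alpha> L C" "L > 0"
  obtains \<alpha>1 \<alpha>2 where
    "\<And>t. t \<in> {0..L} \<Longrightarrow> (\<alpha> has_vector_derivative \<alpha>1 t) (at t within {0..L})"
    "\<And>t. t \<in> {0..L} \<Longrightarrow> (\<alpha>1 has_vector_derivative \<alpha>2 t) (at t within {0..L})"
    "continuous_on {0..L} \<alpha>2"
    "\<And>t. t \<in> {0..L} \<Longrightarrow> \<alpha>1 t \<noteq> 0"
proof -
  obtain \<alpha>1 \<alpha>2 where d1: "\<And>t. t \<in> {0..L} \<Longrightarrow> (\<alpha> has_vector_derivative \<alpha>1 t) (at t within {0..L})"
    and "\<And>t. t \<in> {0..L} \<Longrightarrow> (\<alpha>1 has_vector_derivative \<alpha>2 t) (at t within {0..L})"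
    and "continuous_on {0..L} \<alpha>2"
    using assms(1) unfolding C2_embedding_def C2_on_def by blast
  moreover have "\<alpha>1 t \<noteq> 0" if "t \<in> {0..L}" for t
  proof -
    have "vector_derivative \<alpha> (at t within {0..L}) = \<alpha>1 t"
      using vector_derivative_within_cbox[of 0 L t \<alpha> "\<alpha>1 t"] \<open>L > 0\<close> that d1[OF that]
      by (simp add: cbox_interval)
    then show ?thesis
      using assms(1) that by (auto simp: C2_embedding_def)
  qed
  ultimately show ?thesis
    using that by blast
qed

lemma admissible_curve_arclength_reparametrization:
  fixes \<beta> \<beta>1 \<beta>2 :: "real \<Rightarrow> real^'d::finite"
  assumes "L0 > 0"
    and d1: "\<And>t. t \<in> {0..L0} \<Longrightarrow> (\<beta> has_vector_derivative \<beta>1 t) (at t within {0..L0})"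
    and d2: "\<And>t. t \<in> {0..L0} \<Longrightarrow> (\<beta>1 has_vector_derivative \<beta>2 t) (at t within {0..L0})"
    and c2: "continuous_on {0..L0} \<beta>2"
    and nz: "\<And>t. t \<in> {0..L0} \<Longrightarrow> \<beta>1 t \<noteq> 0"
    and inj: "inj_on \<beta> {0..L0}" and img: "\<beta> ` {0..L0} \<subseteq> C"
    and "\<beta> 0 = \<omega>I" "\<beta> L0 = \<omega>F"
    and transversal: "\<And>h t. h \<in> S_set M \<Longrightarrow> t \<in> {0..L0} \<Longrightarrow> \<beta> t \<in> E_plane h \<Longrightarrow> ivec (fst h) \<bullet> \<beta>1 t \<noteq> 0"
  obtains L \<rho> where "L > 0" "\<rho> ` {0..L} = {0..L0}" "admissible_curve M C (\<beta> \<circ> \<rho>) L \<omega>I \<omega>F"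
proof -
  obtain L \<rho> where "L > 0" and bij: "bij_betw \<rho> {0..L} {0..L0}" and "\<rho> 0 = 0" "\<rho> L = L0"
    and C2: "C2_on (\<beta> \<circ> \<rho>) {0..L}"
    and deriv: "\<And>s. s \<in> {0..L} \<Longrightarrow> ((\<beta> \<circ> \<rho>) has_vector_derivative sgn (\<beta>1 (\<rho> s))) (at s within {0..L})"
    using C2_arclength_reparametrization[OF \<open>L0 > 0\<close> d1 d2 c2 nz] by blast
  have \<rho>_img: "\<rho> ` {0..L} = {0..L0}"
    using bij by (simp add: bij_betw_def)
  have vd: "vector_derivative (\<beta> \<circ> \<rho>) (at s within {0..L}) = sgn (\<beta>1 (\<rho> s))" if "s \<in> {0..L}" for s
    using vector_derivative_within_cbox[of 0 L s "\<beta> \<circ> \<rho>"] \<open>L > 0\<close> that deriv[OF that]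
    by (simp add: cbox_interval)
  have nz_\<rho>: "\<beta>1 (\<rho> s) \<noteq> 0" if "s \<in> {0..L}" for s
    using nz \<rho>_img that by blast
  have "admissible_curve M C (\<beta> \<circ> \<rho>) L \<omega>I \<omega>F"
    unfolding admissible_curve_def C2_embedding_def
  proof (intro conjI ballI impI)
    show "C2_on (\<beta> \<circ> \<rho>) {0..L}" by (rule C2)
    show "(\<beta> \<circ> \<rho>) ` {0..L} \<subseteq> C" using img \<rho>_img by (metis image_comp)
    show "inj_on (\<beta> \<circ> \<rho>) {0..L}"
      using bij inj by (auto simp: bij_betw_def intro: comp_inj_on)
    show "(\<beta> \<circ> \<rho>) 0 = \<omega>I" "(\<beta> \<circ> \<rho>) L = \<omega>F"
      using \<open>\<rho> 0 = 0\<close> \<open>\<rho> L = L0\<close> \<open>\<beta> 0 = \<omega>I\<close> \<open>\<beta> L0 = \<omega>F\<close> by simp_all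
    show "vector_derivative (\<beta> \<circ> \<rho>) (at s within {0..L}) \<noteq> 0" if "s \<in> {0..L}" for s
      using vd[OF that] nz_\<rho>[OF that] by (simp add: sgn_zero_iff)
    show "norm (vector_derivative (\<beta> \<circ> \<rho>) (at s within {0..L})) = 1" if "s \<in> {0<..<L}" for s
      using vd nz_\<rho> that by (simp add: norm_sgn)
    fix h s assume "h \<in> S_set M" and s: "s \<in> {0..L}" and "(\<beta> \<circ> \<rho>) s \<in> E_plane h"
    moreover have "\<rho> s \<in> {0..L0}"
      using \<rho>_img s by blast
    ultimately have "ivec (fst h) \<bullet> \<beta>1 (\<rho> s) \<noteq> 0"
      using transversal by simp
    then show "ivec (fst h) \<bullet> vector_derivative (\<beta> \<circ> \<rho>) (at s within {0..L}) \<noteq> 0"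
      using vd[OF s] nz_\<rho>[OF s] by (simp add: sgn_div_norm)
  qed
  then show ?thesis
    using that \<open>L > 0\<close> \<rho>_img by blast
qed

lemma exists_admissible_curve_near:
  fixes \<alpha> :: "real \<Rightarrow> real^'d::finite"
  assumes "open C" "L0 > 0" "C2_embedding \<alpha> L0 C" "\<eta> > 0"
  obtains \<gamma> L where "L > 0" "admissible_curve M C \<gamma> L (\<alpha> 0) (\<alpha> L0)"
    "\<And>s. s \<in> {0..L} \<Longrightarrow> infdist (\<gamma> s) (\<alpha> ` {0..L0}) < \<eta>"
proof -
  obtain \<alpha>1 \<alpha>2 where d1: "\<And>t. t \<in> {0..L0} \<Longrightarrow> (\<alpha> has_vector_derivative \<alpha>1 t) (at t within {0..L0})"
    and d2: "\<And>t. t \<in> {0..L0} \<Longrightarrow> (\<alpha>1 has_vector_derivative \<alpha>2 t) (at t within {0..L0})"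
    and c2: "continuous_on {0..L0} \<alpha>2" and nz: "\<And>t. t \<in> {0..L0} \<Longrightarrow> \<alpha>1 t \<noteq> 0"
    using C2_embeddingE[OF assms(3,2)] by blast
  have img: "\<alpha> ` {0..L0} \<subseteq> C" and inj: "inj_on \<alpha> {0..L0}"
    using assms(3) by (auto simp: C2_embedding_def)
  define H :: "((real^'d) \<times> real) set" where "H = (\<lambda>h. (ivec (fst h), real_of_int (snd h))) ` S_set M"
  have "finite H" "0 \<notin> fst ` H"
    using finite_S_set by (auto simp: H_def S_set_def)
  obtain \<beta> \<beta>1 \<beta>2 where d: "\<And>t. t \<in> {0..L0} \<Longrightarrow> (\<beta> has_vector_derivative \<beta>1 t) (at t within {0..L0})"
    "\<And>t. t \<in> {0..L0} \<Longrightarrow> (\<beta>1 has_vector_derivative \<beta>2 t) (at t within {0..L0})"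
    "continuous_on {0..L0} \<beta>2" "\<And>t. t \<in> {0..L0} \<Longrightarrow> \<beta>1 t \<noteq> 0"
    and \<beta>: "inj_on \<beta> {0..L0}" "\<beta> ` {0..L0} \<subseteq> C" "\<beta> 0 = \<alpha> 0" "\<beta> L0 = \<alpha> L0"
    and close: "\<And>t. t \<in> {0..L0} \<Longrightarrow> dist (\<beta> t) (\<alpha> t) < \<eta>"
    and transversal: "\<And>n l t. (n, l) \<in> H \<Longrightarrow> t \<in> {0..L0} \<Longrightarrow> n \<bullet> \<beta> t + l = 0 \<Longrightarrow> n \<bullet> \<beta>1 t \<noteq> 0"
    using exists_transversal_perturbation[OF \<open>L0 > 0\<close> d1 d2 c2 nz inj \<open>open C\<close> img \<open>finite H\<close> \<open>0 \<notin> fst ` H\<close> \<open>\<eta> > 0\<close>]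
    by blast
  have S_trans: "ivec (fst h) \<bullet> \<beta>1 t \<noteq> 0" if "h \<in> S_set M" "t \<in> {0..L0}" "\<beta> t \<in> E_plane h" for h t
    using transversal[of "ivec (fst h)" "real_of_int (snd h)" t] that by (auto simp: H_def E_plane_def)
  obtain L \<rho> where "L > 0" and \<rho>_img: "\<rho> ` {0..L} = {0..L0}"
    and "admissible_curve M C (\<beta> \<circ> \<rho>) L (\<alpha> 0) (\<alpha> L0)"
    using admissible_curve_arclength_reparametrization[OF \<open>L0 > 0\<close> d \<beta> S_trans] by blast
  moreover have "infdist ((\<beta> \<circ> \<rho>) s) (\<alpha> ` {0..L0}) < \<eta>" if "s \<in> {0..L}" for s
  proof -
    have "\<rho> s \<in> {0..L0}"
      using \<rho>_img that by blast
    then have "infdist (\<beta> (\<rho> s)) (\<alpha> ` {0..L0}) \<le> dist (\<beta> (\<rho> s)) (\<alpha> (\<rho> s))"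
      by (simp add: infdist_le)
    also have "\<dots> < \<eta>"
      using close[OF \<open>\<rho> s \<in> {0..L0}\<close>] .
    finally show ?thesis
      by simp
  qed
  ultimately show ?thesis
    using that by blast
qed

theorem lemma5p1:
  fixes N :: nat and M :: real and C :: "(real ^ 'd::finite) set"
    and \<omega>I \<omega>F :: "real ^ 'd" and \<alpha> :: "real \<Rightarrow> real ^ 'd" and L0 :: real
  assumes "M > 0"
    and "C \<in> components (UNIV - resonant_set (real N))"
    and "\<omega>I \<in> C" and "\<omega>F \<in> C"
    and "L0 > 0"
    and "C2_embedding \<alpha> L0 C" and "\<alpha> 0 = \<omega>I" and "\<alpha> L0 = \<omega>F"
  shows "\<forall>\<eta>>0. \<exists>\<gamma> L. L > 0 \<and> admissible_curve M C \<gamma> L \<omega>I \<omega>F \<and>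
           (\<forall>s\<in>{0..L}. infdist (\<gamma> s) (\<alpha> ` {0..L0}) < \<eta>)"
proof (intro allI impI)
  fix \<eta> :: real assume "\<eta> > 0"
  have "open C"
    using open_components[OF open_Diff[OF open_UNIV closed_resonant_set] assms(2)] .
  obtain \<gamma> L where "L > 0" "admissible_curve M C \<gamma> L \<omega>I \<omega>F"
    "\<And>s. s \<in> {0..L} \<Longrightarrow> infdist (\<gamma> s) (\<alpha> ` {0..L0}) < \<eta>"
    using exists_admissible_curve_near[OF \<open>open C\<close> \<open>L0 > 0\<close> assms(6) \<open>\<eta> > 0\<close>, of M, unfolded assms(7,8)]
    by blast
  then show "\<exists>\<gamma> L. L > 0 \<and> admissible_curve M C \<gamma> L \<omega>I \<omega>F \<and>
      (\<forall>s\<in>{0..L}. infdist (\<gamma> s) (\<alpha> ` {0..L0}) < \<eta>)"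
    by blast
qed

end
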